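(* Let $n\in\mathbb{N}$, let $E=E(\mathbb{R}^n)$ and $X=X(\mathbb{R}^n)$ be rearrangement-invariant spaces with Luxemburg representations $\widetilde{E}(0,\infty)$, $\widetilde{X}(0,\infty)$, and let $\Phi\in B_n(\infty)$. Then the embedding $K_3\mapsto\widetilde{X}(0,\infty)$ holds if and only if the operator $T_\Phi$ is bounded from $\widetilde{E}(0,\infty)$ to $\widetilde{X}(0,\infty)$, i.e. there is $C>0$ with $\|T_\Phi f\|_{\widetilde{X}}\le C\|f\|_{\widetilde{E}}$ for all $f\in\widetilde{E}(0,\infty)$, where $(T_\Phi f)(x)=\sup_{x<t<\infty}\Phi(t^{1/n})\,t\,f^{**}(t)$.
   Context: A rearrangement-invariant space (RIS) on $\mathbb{R}^n$ is a Banach function space (Bennett–Sharpley) with respect to Lebesgue measure whose norm satisfies $\|f\|\le\|g\|$ whenever $f^*\le g^*$; $f^*(t)=\inf\{y>0:|\{|f|>y\}|\le t\}$, $f^{**}(t)=\frac1t\int_0^tf^*$. The Luxemburg representation $\widetilde{X}(0,\infty)$ of $X$ is the RIS on $(0,\infty)$ with $\|f\|_X=\|f^*\|_{\widetilde{X}}$ (similarly $\widetilde{E}$). Class $B_n(\infty)$: $\Phi:(0,\infty)\to(0,\infty)$ decreasing and continuous with $\int_0^r\Phi(\rho)\rho^{n-1}d\rho\le C\Phi(r)r^n$ for all $r>0$, some $C>0$. $K_3=\{h:\ h(t)=\sup_{t<\tau<\infty}\tau\Phi(\tau^{1/n})u^{**}(\tau)\ \forall t>0,\text{ for some }u\in E\}$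 with $\rho_{K_3}(h)=\inf\{\|u\|_E:\ u\in E,\ \sup_{t<\tau<\infty}\tau\Phi(\tau^{1/n})u^{**}(\tau)=h(t)\ \forall t>0\}$. The embedding $K_3\mapsto\widetilde{X}$ means $K_3\subset\widetilde{X}$ and $\|h\|_{\widetilde{X}}\le C\rho_{K_3}(h)$ for all $h\in K_3$. *)

theory Defs
  imports "HOL-Analysis.Analysis"
begin

text \<open>Function norms in the sense of Bennett--Sharpley (properties P1--P5), acting on
  nonnegative measurable functions with values in [0,\<infinity>].\<close>

definition function_norm :: "'a measure \<Rightarrow> (('a \<Rightarrow> ennreal) \<Rightarrow> ennreal) \<Rightarrow> bool" where
  "function_norm M \<rho> \<longleftrightarrow>
     (\<forall>f\<in>borel_measurable M. \<rho> f = 0 \<longleftrightarrow> (AE x in M. f x = 0)) \<and>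
     (\<forall>f\<in>borel_measurable M. \<forall>a::real. 0 \<le> a \<longrightarrow> \<rho> (\<lambda>x. ennreal a * f x) = ennreal a * \<rho> f) \<and>
     (\<forall>f\<in>borel_measurable M. \<forall>g\<in>borel_measurable M. \<rho> (\<lambda>x. f x + g x) \<le> \<rho> f + \<rho> g) \<and>
     (\<forall>f\<in>borel_measurable M. \<forall>g\<in>borel_measurable M. (AE x in M. g x \<le> f x) \<longrightarrow> \<rho> g \<le> \<rho> f) \<and>
     (\<forall>fs f. (\<forall>k. fs k \<in> borel_measurable M) \<longrightarrow> f \<in> borel_measurable M \<longrightarrow>
        (AE x in M. incseq (\<lambda>k. fs k x) \<and> f x = (SUP k. fs k x)) \<longrightarrow>
        \<rho> f = (SUP k. \<rho> (fs k))) \<and>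
     (\<forall>A\<in>sets M. emeasure M A < \<infinity> \<longrightarrow> \<rho> (indicator A) < \<infinity>) \<and>
     (\<forall>A\<in>sets M. emeasure M A < \<infinity> \<longrightarrow>
        (\<exists>c::real. \<forall>f\<in>borel_measurable M. (\<integral>\<^sup>+x\<in>A. f x \<partial>M) \<le> ennreal c * \<rho> f))"

text \<open>Decreasing rearrangement f* (t) = inf {y > 0 : mu{f > y} <= t}  (inf of empty set = \<infinity>)
  and maximal function f** (t) = (1/t) int_0^t f*.\<close>

definition rearr :: "'a measure \<Rightarrow> ('a \<Rightarrow> ennreal) \<Rightarrow> real \<Rightarrow> ennreal" where
  "rearr M f t = Inf {y::ennreal. 0 < y \<and> emeasure M {x\<in>space M. y < f x} \<le> ennreal t}"

definition dstar :: "'a measure \<Rightarrow> ('a \<Rightarrow> ennreal) \<Rightarrow> real \<Rightarrow> ennreal" where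
  "dstar M f t = (\<integral>\<^sup>+s\<in>{0<..<t}. rearr M f s \<partial>lborel) / ennreal t"

definition halfline :: "real measure" where
  "halfline = restrict_space lebesgue {0<..}"

definition rearrangement_invariant :: "'a measure \<Rightarrow> (('a \<Rightarrow> ennreal) \<Rightarrow> ennreal) \<Rightarrow> bool" where
  "rearrangement_invariant M \<rho> \<longleftrightarrow>
     (\<forall>f\<in>borel_measurable M. \<forall>g\<in>borel_measurable M.
        (\<forall>t>0. rearr M f t \<le> rearr M g t) \<longrightarrow> \<rho> f \<le> \<rho> g)"

definition RIS :: "'a measure \<Rightarrow> (('a \<Rightarrow> ennreal) \<Rightarrow> ennreal) \<Rightarrow> bool" where
  "RIS M \<rho> \<longleftrightarrow> function_norm M \<rho> \<and> rearrangement_invariant M \<rho>"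

definition luxemburg_rep :: "'a measure \<Rightarrow> (('a \<Rightarrow> ennreal) \<Rightarrow> ennreal) \<Rightarrow> ((real \<Rightarrow> ennreal) \<Rightarrow> ennreal) \<Rightarrow> bool" where
  "luxemburg_rep M \<rho> \<rho>t \<longleftrightarrow> RIS halfline \<rho>t \<and> (\<forall>f\<in>borel_measurable M. \<rho> f = \<rho>t (rearr M f))"

definition in_space :: "'a measure \<Rightarrow> (('a \<Rightarrow> ennreal) \<Rightarrow> ennreal) \<Rightarrow> ('a \<Rightarrow> real) \<Rightarrow> bool" where
  "in_space M \<rho> u \<longleftrightarrow> u \<in> borel_measurable M \<and> \<rho> (\<lambda>x. ennreal \<bar>u x\<bar>) < \<infinity>"

definition class_B :: "nat \<Rightarrow> (real \<Rightarrow> real) \<Rightarrow> bool" where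
  "class_B n \<Phi> \<longleftrightarrow>
     (\<forall>r>0. 0 < \<Phi> r) \<and>
     (\<forall>s t. 0 < s \<longrightarrow> s \<le> t \<longrightarrow> \<Phi> t \<le> \<Phi> s) \<and>
     continuous_on {0<..} \<Phi> \<and>
     (\<exists>C>0. \<forall>r>0. (\<integral>\<^sup>+\<rho>\<in>{0<..<r}. ennreal (\<Phi> \<rho> * \<rho> ^ (n - 1)) \<partial>lborel)
                  \<le> ennreal (C * \<Phi> r * r ^ n))"

text \<open>Top n Phi M u t = sup_{t<tau<\<infinity>} tau Phi(tau^(1/n)) |u|**(tau).
  With M = halfline this is the operator T_Phi; with M = lebesgue on R^n it gives the
  elements of K_3.\<close>

definition Top :: "nat \<Rightarrow> (real \<Rightarrow> real) \<Rightarrow> 'a measure \<Rightarrow> ('a \<Rightarrow> real) \<Rightarrow> real \<Rightarrow> ennreal" where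
  "Top n \<Phi> M u t = (SUP \<tau>\<in>{t<..}. ennreal (\<Phi> (\<tau> powr (1 / real n)) * \<tau>) * dstar M (\<lambda>x. ennreal \<bar>u x\<bar>) \<tau>)"

definition K3 :: "nat \<Rightarrow> (real \<Rightarrow> real) \<Rightarrow> 'a measure \<Rightarrow> (('a \<Rightarrow> ennreal) \<Rightarrow> ennreal) \<Rightarrow> (real \<Rightarrow> ennreal) set" where
  "K3 n \<Phi> M \<rho>E = {h. \<exists>u. in_space M \<rho>E u \<and> (\<forall>t>0. h t = Top n \<Phi> M u t)}"

definition rho_K3 :: "nat \<Rightarrow> (real \<Rightarrow> real) \<Rightarrow> 'a measure \<Rightarrow> (('a \<Rightarrow> ennreal) \<Rightarrow> ennreal) \<Rightarrow> (real \<Rightarrow> ennreal) \<Rightarrow> ennreal" where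
  "rho_K3 n \<Phi> M \<rho>E h = Inf {\<rho>E (\<lambda>x. ennreal \<bar>u x\<bar>) | u. in_space M \<rho>E u \<and> (\<forall>t>0. h t = Top n \<Phi> M u t)}"

end

theory Submission
  imports Defs
begin

(* Both sides of the equivalence only see decreasing rearrangements: T_\<Phi> f and the
   elements of K_3 depend on a function only through f*, and all norms factor through the
   Luxemburg representation. Every u \<in> E has the representative u* \<in> E~ with the same
   rearrangement and norm; conversely every f \<in> E~ is equimeasurable with the radial
   function x \<mapsto> f*(\<omega>_n |x|^n) on \<real>^n, because x \<mapsto> \<omega>_n |x|^n maps Lebesgue
   measure onto Lebesgue measure on (0,\<infinity>). Hence K_3 is exactly the range of T_\<Phi>
   on E~, with \<rho>_K_3 (T_\<Phi> f) \<le> \<parallel>f\<parallel>_E~, and both statements say the same thing. *)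

section \<open>Decreasing rearrangement\<close>

lemma rearr_antimono: "antimono (rearr M g)"
proof (rule antimonoI)
  fix s t :: real assume "s \<le> t"
  then have "ennreal s \<le> ennreal t" by (rule ennreal_leI)
  then show "rearr M g t \<le> rearr M g s"
    unfolding rearr_def by (intro Inf_superset_mono) (auto intro: order.trans)
qed

lemma borel_measurable_antimono_ennreal:
  fixes F :: "real \<Rightarrow> ennreal"
  assumes "antimono F"
  shows "F \<in> borel_measurable borel"
proof (rule borel_measurableI_greater)
  fix y
  have "is_interval {x. y < F x}"
    unfolding is_interval_1 using assms by (auto simp: antimono_def intro: order.strict_trans2)
  then show "{x \<in> space borel. y < F x} \<in> sets borel"
    by (simp add: real_interval_borel_measurable)
qed

lemma rearr_borel_measurable: "rearr M g \<in> borel_measurable borel"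
  by (rule borel_measurable_antimono_ennreal[OF rearr_antimono])

lemma emeasure_greater_eq_SUP:
  fixes g :: "'a \<Rightarrow> ennreal"
  assumes g: "g \<in> borel_measurable M" and y: "y < \<infinity>"
  shows "emeasure M {x\<in>space M. y < g x}
    = (SUP k. emeasure M {x\<in>space M. y + ennreal (inverse (real (Suc k))) < g x})"
proof -
  define A where "A k = {x\<in>space M. y + ennreal (inverse (real (Suc k))) < g x}" for k
  have "incseq A"
  proof (rule incseq_SucI)
    fix k
    have "ennreal (inverse (real (Suc (Suc k)))) \<le> ennreal (inverse (real (Suc k)))"
      by (intro ennreal_leI) (simp add: field_simps)
    then show "A k \<subseteq> A (Suc k)"
      unfolding A_def by (auto intro: order.strict_trans1[rotated] add_left_mono)
  qed
  moreover have "(\<Union>k. A k) = {x\<in>space M. y < g x}"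
  proof
    show "(\<Union>k. A k) \<subseteq> {x\<in>space M. y < g x}"
      unfolding A_def by (auto intro: order.strict_trans1[rotated] add_increasing2)
    have "(\<lambda>k. y + ennreal (inverse (real (Suc k)))) \<longlonglongrightarrow> y + ennreal 0"
      by (intro tendsto_intros LIMSEQ_inverse_real_of_nat)
    then have lim: "(\<lambda>k. y + ennreal (inverse (real (Suc k)))) \<longlonglongrightarrow> y"
      by simp
    have "\<exists>k. y + ennreal (inverse (real (Suc k))) < w" if "y < w" for w
      using order_tendstoD(2)[OF lim that] unfolding eventually_sequentially by blast
    then show "{x\<in>space M. y < g x} \<subseteq> (\<Union>k. A k)"
      unfolding A_def by blast
  qed
  moreover have "range A \<subseteq> sets M"
    unfolding A_def using g by auto
  ultimately show ?thesis
    using SUP_emeasure_incseq[of A M] by (simp add: A_def)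
qed

lemma rearr_le_iff:
  assumes g: "g \<in> borel_measurable M" and y: "0 < y"
  shows "rearr M g t \<le> y \<longleftrightarrow> emeasure M {x\<in>space M. y < g x} \<le> ennreal t"
proof
  assume "emeasure M {x\<in>space M. y < g x} \<le> ennreal t"
  then show "rearr M g t \<le> y"
    unfolding rearr_def using y by (auto intro: Inf_lower)
next
  assume le: "rearr M g t \<le> y"
  show "emeasure M {x\<in>space M. y < g x} \<le> ennreal t"
  proof (cases "y = \<infinity>")
    case False
    then have yfin: "y < \<infinity>" by (simp add: top.not_eq_extremum)
    have "emeasure M {x\<in>space M. y + e < g x} \<le> ennreal t" if e: "0 < e" for e :: real
    proof -
      have "rearr M g t < y + e"
        using le yfin e by (auto intro: order.strict_trans1 simp: ennreal_add_left_cancel_less)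
      then obtain z where z: "0 < z" "emeasure M {x\<in>space M. z < g x} \<le> ennreal t" "z < y + e"
        unfolding rearr_def Inf_less_iff by auto
      have "emeasure M {x\<in>space M. y + e < g x} \<le> emeasure M {x\<in>space M. z < g x}"
        using g z(3) by (intro emeasure_mono) (auto intro: order.strict_trans)
      with z(2) show ?thesis by simp
    qed
    then show ?thesis
      by (simp add: emeasure_greater_eq_SUP[OF g yfin] SUP_le_iff)
  qed simp
qed

lemma rearr_gt_iff:
  assumes "g \<in> borel_measurable M" and "0 < y"
  shows "y < rearr M g t \<longleftrightarrow> ennreal t < emeasure M {x\<in>space M. y < g x}"
  using rearr_le_iff[OF assms, of t] by (simp add: not_le[symmetric])

lemma rearr_eqI:
  assumes "\<And>y. 0 < y \<Longrightarrow> emeasure M {x\<in>space M. y < f x} = emeasure N {x\<in>space N. y < g x}"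
  shows "rearr M f = rearr N g"
  unfolding rearr_def using assms by (intro ext arg_cong[where f = Inf]) auto

lemma rearr_AE_cong:
  assumes "f \<in> borel_measurable M" "g \<in> borel_measurable M" "AE x in M. f x = g x"
  shows "rearr M f = rearr M g"
  using assms by (intro rearr_eqI emeasure_eq_AE) auto

section \<open>The half-line and radial functions\<close>

lemma emeasure_lborel_Ioi_eq_top: "emeasure lborel {a::real<..} = \<infinity>"
proof -
  have "of_nat k \<le> emeasure lborel {a::real<..}" for k
  proof -
    have "emeasure lborel {a<..<a + real k} \<le> emeasure lborel {a<..}"
      by (rule emeasure_mono) auto
    then show ?thesis
      by (simp add: ennreal_of_nat_eq_real_of_nat)
  qed
  then have "(SUP k. of_nat k) \<le> emeasure lborel {a::real<..}"
    by (intro SUP_least)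
  then show ?thesis
    by (simp add: ennreal_SUP_of_nat_eq_top top_unique)
qed

lemma space_halfline: "space halfline = {0<..}"
  by (simp add: halfline_def space_restrict_space)

lemma sets_halflineI: "A \<in> sets borel \<Longrightarrow> A \<subseteq> {0<..} \<Longrightarrow> A \<in> sets halfline"
  unfolding halfline_def sets_restrict_space by (auto intro!: image_eqI[where x = A])

lemma emeasure_halfline:
  "A \<in> sets borel \<Longrightarrow> A \<subseteq> {0<..} \<Longrightarrow> emeasure halfline A = emeasure lborel A"
  unfolding halfline_def by (subst emeasure_restrict_space) auto

lemma borel_measurable_halflineI: "f \<in> borel_measurable borel \<Longrightarrow> f \<in> borel_measurable halfline"
  unfolding halfline_def by (intro measurable_restrict_space1 measurable_completion) simp

lemma emeasure_halfline_greater_rearr: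
  assumes g: "g \<in> borel_measurable M" and y: "0 < y"
  shows "emeasure halfline {t\<in>space halfline. y < rearr M g t} = emeasure M {x\<in>space M. y < g x}"
proof (cases "emeasure M {x\<in>space M. y < g x}")
  case (real r)
  have "y < rearr M g t \<longleftrightarrow> t < r" if "0 < t" for t
    using rearr_gt_iff[OF g y, of t] real that by (simp add: ennreal_less_iff)
  then have "{t\<in>space halfline. y < rearr M g t} = {0<..<r}"
    by (auto simp: space_halfline)
  moreover have "emeasure halfline {0<..<r} = ennreal r"
    using real by (subst emeasure_halfline) auto
  ultimately show ?thesis
    using real by simp
next
  case top
  then have "{t\<in>space halfline. y < rearr M g t} = {0<..}"
    using rearr_gt_iff[OF g y] by (auto simp: space_halfline)
  moreover have "emeasure halfline {0<..} = \<infinity>"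
    by (subst emeasure_halfline) (auto simp: emeasure_lborel_Ioi_eq_top)
  ultimately show ?thesis
    using top by simp
qed

lemma rearr_rearr: "g \<in> borel_measurable M \<Longrightarrow> rearr halfline (rearr M g) = rearr M g"
  by (intro rearr_eqI emeasure_halfline_greater_rearr)

lemma emeasure_radial_sublevel:
  fixes d :: ennreal
  shows "emeasure lebesgue
      {x::'a::euclidean_space. ennreal (unit_ball_vol DIM('a) * norm x ^ DIM('a)) < d} = d"
proof (cases d)
  case (real r)
  define c where "c = unit_ball_vol DIM('a)"
  define R where "R = root DIM('a) (r / c)"
  have c: "0 < c" unfolding c_def by simp
  have R: "0 \<le> R" unfolding R_def using c real by simp
  have cR: "c * R ^ DIM('a) = r"
    unfolding R_def using c real by simp
  have sublevel_iff: "ennreal (c * norm x ^ DIM('a)) < d \<longleftrightarrow> norm x < R" for x :: 'a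
  proof -
    have "ennreal (c * norm x ^ DIM('a)) < d \<longleftrightarrow> c * norm x ^ DIM('a) < c * R ^ DIM('a)"
      using real cR c by (simp add: ennreal_less_iff)
    also have "\<dots> \<longleftrightarrow> norm x ^ DIM('a) < R ^ DIM('a)"
      using c by (rule mult_less_cancel_left_pos)
    also have "\<dots> \<longleftrightarrow> norm x < R"
      using R by (simp add: not_le[symmetric])
    finally show ?thesis .
  qed
  then have "{x::'a. ennreal (c * norm x ^ DIM('a)) < d} = ball 0 R"
    using sublevel_iff by (simp add: set_eq_iff mem_ball_0)
  then show ?thesis
    using real R cR by (simp add: c_def emeasure_ball)
qed simp

lemma rearr_radial:
  assumes g: "g \<in> borel_measurable M"
  shows "rearr lebesgue (\<lambda>x::'a::euclidean_space. rearr M g (unit_ball_vol DIM('a) * norm x ^ DIM('a)))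
    = rearr M g"
proof (rule rearr_eqI)
  fix y :: ennreal assume y: "0 < y"
  have eq: "{x::'a\<in>space lebesgue. y < rearr M g (unit_ball_vol DIM('a) * norm x ^ DIM('a))}
    = {x::'a. ennreal (unit_ball_vol DIM('a) * norm x ^ DIM('a)) < emeasure M {x\<in>space M. y < g x}}"
    using rearr_gt_iff[OF g y] by auto
  show "emeasure lebesgue {x::'a\<in>space lebesgue. y < rearr M g (unit_ball_vol DIM('a) * norm x ^ DIM('a))}
    = emeasure M {x\<in>space M. y < g x}"
    unfolding eq by (rule emeasure_radial_sublevel)
qed

lemma function_norm_mono:
  assumes "function_norm M \<rho>" "f \<in> borel_measurable M" "g \<in> borel_measurable M"
    and "AE x in M. g x \<le> f x"
  shows "\<rho> g \<le> \<rho> f"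
  using assms unfolding function_norm_def by blast

lemma function_norm_eq_0_iff:
  assumes "function_norm M \<rho>" "f \<in> borel_measurable M"
  shows "\<rho> f = 0 \<longleftrightarrow> (AE x in M. f x = 0)"
  using assms unfolding function_norm_def by blast

lemma function_norm_scale:
  assumes "function_norm M \<rho>" "f \<in> borel_measurable M" "0 \<le> a"
  shows "\<rho> (\<lambda>x. ennreal a * f x) = ennreal a * \<rho> f"
  using assms unfolding function_norm_def by blast

lemma function_norm_AE_cong:
  assumes "function_norm M \<rho>" "f \<in> borel_measurable M" "g \<in> borel_measurable M"
    and "AE x in M. f x = g x"
  shows "\<rho> f = \<rho> g"
proof (rule order.antisym)
  show "\<rho> f \<le> \<rho> g"
    using assms(4) by (intro function_norm_mono[OF assms(1,3,2)]) auto
  show "\<rho> g \<le> \<rho> f"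
    using assms(4) by (intro function_norm_mono[OF assms(1-3)]) auto
qed

lemma RIS_function_norm: "RIS M \<rho> \<Longrightarrow> function_norm M \<rho>"
  unfolding RIS_def by (rule conjunct1)

lemma RIS_rearr_eq:
  assumes "RIS halfline \<rho>" and g: "g \<in> borel_measurable halfline"
  shows "\<rho> (rearr halfline g) = \<rho> g"
proof -
  have RI: "\<rho> f1 \<le> \<rho> f2"
    if "f1 \<in> borel_measurable halfline" "f2 \<in> borel_measurable halfline"
      and "rearr halfline f1 = rearr halfline f2" for f1 f2
    using assms(1) that unfolding RIS_def rearrangement_invariant_def by simp
  have "rearr halfline g \<in> borel_measurable halfline"
    by (rule borel_measurable_halflineI[OF rearr_borel_measurable])
  moreover have "rearr halfline (rearr halfline g) = rearr halfline g"
    using g by (rule rearr_rearr)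
  ultimately show ?thesis
    using g by (intro order.antisym RI) auto
qed

lemma function_norm_halfline_indicator_neq_0:
  assumes "function_norm halfline \<rho>" and "0 < t"
  shows "\<rho> (indicator {0<..<t}) \<noteq> 0"
proof
  have I: "{0<..<t} \<in> sets halfline"
    by (rule sets_halflineI) auto
  assume "\<rho> (indicator {0<..<t}) = 0"
  with assms(1) I have AE: "AE x in halfline. indicator {0<..<t} x = (0::ennreal)"
    by (simp add: function_norm_eq_0_iff)
  have "{x\<in>space halfline. indicator {0<..<t} x \<noteq> (0::ennreal)} = {0<..<t}"
    by (auto simp: space_halfline split: split_indicator)
  from AE_iff_measurable[OF I this] AE have "emeasure halfline {0<..<t} = 0"
    by simp
  moreover have "emeasure halfline {0<..<t} = ennreal t"
    using assms(2) by (subst emeasure_halfline) auto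
  ultimately show False
    using assms(2) by simp
qed

text \<open>If F t = \<infinity>, then F dominates every multiple of the indicator of (0,t), whose norm
  is positive.\<close>

lemma function_norm_halfline_antimono_finite:
  assumes \<rho>: "function_norm halfline \<rho>" and F: "antimono F" "F \<in> borel_measurable halfline"
    and fin: "\<rho> F < \<infinity>" and t: "0 < t"
  shows "F t < \<infinity>"
proof (rule ccontr)
  assume "\<not> F t < \<infinity>"
  then have Ft: "F t = \<infinity>" by (simp add: less_top[symmetric])
  define I :: "real \<Rightarrow> ennreal" where "I = indicator {0<..<t}"
  have I: "I \<in> borel_measurable halfline"
    unfolding I_def by (intro borel_measurable_halflineI borel_measurable_indicator) simp
  have "ennreal (real k) * \<rho> I \<le> \<rho> F" for k
  proof -
    have "\<rho> (\<lambda>x. ennreal (real k) * I x) = ennreal (real k) * \<rho> I"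
      using \<rho> I by (simp add: function_norm_scale)
    moreover have "ennreal (real k) * I x \<le> F x" for x
    proof (cases "x \<in> {0<..<t}")
      case True
      then have "F t \<le> F x" using F(1) by (simp add: antimono_def)
      then show ?thesis using Ft by (simp add: top_unique)
    qed (simp add: I_def)
    then have "\<rho> (\<lambda>x. ennreal (real k) * I x) \<le> \<rho> F"
      using I by (intro function_norm_mono[OF \<rho> F(2)]) auto
    ultimately show ?thesis by simp
  qed
  then have "(SUP k. of_nat k) * \<rho> I \<le> \<rho> F"
    by (simp add: SUP_mult_right_ennreal ennreal_of_nat_eq_real_of_nat SUP_least)
  then have "\<rho> F = \<infinity>"
    using function_norm_halfline_indicator_neq_0[OF \<rho> t]
    by (simp add: I_def ennreal_SUP_of_nat_eq_top top_unique)
  with fin show False by simp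
qed

lemma RIS_halfline_rearr_finite:
  assumes "RIS halfline \<rho>" "\<rho> (rearr M g) < \<infinity>" "0 < t"
  shows "rearr M g t < \<infinity>"
  using RIS_function_norm[OF assms(1)] rearr_antimono
    borel_measurable_halflineI[OF rearr_borel_measurable] assms(2,3)
  by (rule function_norm_halfline_antimono_finite)

section \<open>Representatives in E and in E~\<close>

lemma halfline_representative:
  assumes lux: "luxemburg_rep M \<rho> \<rho>t" and u: "in_space M \<rho> u"
  obtains f where "in_space halfline \<rho>t f"
    and "\<rho>t (\<lambda>t. ennreal \<bar>f t\<bar>) = \<rho> (\<lambda>x. ennreal \<bar>u x\<bar>)"
    and "rearr halfline (\<lambda>t. ennreal \<bar>f t\<bar>) = rearr M (\<lambda>x. ennreal \<bar>u x\<bar>)"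
proof
  define g where "g = (\<lambda>x. ennreal \<bar>u x\<bar>)"
  define F where "F = rearr M g"
  define f where "f t = enn2real (F t)" for t
  have [measurable]: "u \<in> borel_measurable M"
    using u by (simp add: in_space_def)
  then have g: "g \<in> borel_measurable M"
    unfolding g_def by measurable
  have RIS: "RIS halfline \<rho>t" and norm: "\<rho> g = \<rho>t F"
    using lux g unfolding luxemburg_rep_def F_def by auto
  have F: "F \<in> borel_measurable halfline"
    unfolding F_def by (rule borel_measurable_halflineI[OF rearr_borel_measurable])
  have fin: "\<rho>t F < \<infinity>"
    using u norm by (simp add: in_space_def g_def)
  have f_eq: "AE t in halfline. ennreal \<bar>f t\<bar> = F t"
    using RIS_halfline_rearr_finite[OF RIS fin[unfolded F_def]]
    by (intro AE_I2) (simp add: space_halfline f_def F_def less_top)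
  have f: "f \<in> borel_measurable halfline"
    using F unfolding f_def by measurable
  have f_abs: "(\<lambda>t. ennreal \<bar>f t\<bar>) \<in> borel_measurable halfline"
    using f by measurable
  show norm_f: "\<rho>t (\<lambda>t. ennreal \<bar>f t\<bar>) = \<rho> (\<lambda>x. ennreal \<bar>u x\<bar>)"
    using function_norm_AE_cong[OF RIS_function_norm[OF RIS] f_abs F f_eq] norm
    by (simp add: g_def)
  show "in_space halfline \<rho>t f"
    using f norm_f u by (simp add: in_space_def)
  have "rearr halfline (\<lambda>t. ennreal \<bar>f t\<bar>) = rearr halfline F"
    by (rule rearr_AE_cong[OF f_abs F f_eq])
  also have "\<dots> = F"
    unfolding F_def by (rule rearr_rearr[OF g])
  finally show "rearr halfline (\<lambda>t. ennreal \<bar>f t\<bar>) = rearr M (\<lambda>x. ennreal \<bar>u x\<bar>)"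
    by (simp add: F_def g_def)
qed

lemma radial_representative:
  fixes \<rho> :: "('a::euclidean_space \<Rightarrow> ennreal) \<Rightarrow> ennreal"
  assumes lux: "luxemburg_rep lebesgue \<rho> \<rho>t"
    and f: "in_space halfline \<rho>t f"
  obtains u :: "'a \<Rightarrow> real" where "in_space lebesgue \<rho> u"
    and "\<rho> (\<lambda>x. ennreal \<bar>u x\<bar>) = \<rho>t (\<lambda>t. ennreal \<bar>f t\<bar>)"
    and "rearr lebesgue (\<lambda>x. ennreal \<bar>u x\<bar>) = rearr halfline (\<lambda>t. ennreal \<bar>f t\<bar>)"
proof
  define g where "g = (\<lambda>t. ennreal \<bar>f t\<bar>)"
  define F where "F = rearr halfline g"
  define radial where "radial x = unit_ball_vol DIM('a) * norm x ^ DIM('a)" for x :: 'a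
  define u where "u x = enn2real (F (radial x))" for x
  have [measurable]: "f \<in> borel_measurable halfline"
    using f by (simp add: in_space_def)
  then have g: "g \<in> borel_measurable halfline"
    unfolding g_def by measurable
  have RIS: "RIS halfline \<rho>t"
    and norm: "\<And>v. v \<in> borel_measurable lebesgue \<Longrightarrow> \<rho> v = \<rho>t (rearr lebesgue v)"
    using lux unfolding luxemburg_rep_def by auto
  have fin: "\<rho>t F < \<infinity>"
    using f RIS_rearr_eq[OF RIS g] by (simp add: in_space_def F_def g_def)
  have F[measurable]: "F \<in> borel_measurable borel"
    unfolding F_def by (rule rearr_borel_measurable)
  have "u \<in> borel_measurable borel"
    unfolding u_def radial_def by measurable
  then have u: "u \<in> borel_measurable lebesgue"
    by (intro measurable_completion) simp
  have u_abs: "(\<lambda>x. ennreal \<bar>u x\<bar>) \<in> borel_measurable lebesgue"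
    using u by measurable
  have F_radial: "F \<circ> radial \<in> borel_measurable lebesgue"
    unfolding radial_def o_def by (intro measurable_completion) measurable
  have u_eq: "AE x in lebesgue. ennreal \<bar>u x\<bar> = (F \<circ> radial) x"
  proof -
    have null: "{0::'a} \<in> null_sets lebesgue"
      by (intro null_sets_completionI finite_imp_null_set_lborel) simp
    \<comment> \<open>enn2real sends \<infinity> to 0, and F is only known to be finite on (0,\<infinity>).\<close>
    have "ennreal \<bar>u x\<bar> = (F \<circ> radial) x" if "x \<noteq> 0" for x
      using that RIS_halfline_rearr_finite[OF RIS fin[unfolded F_def], of "radial x"]
      by (simp add: u_def radial_def F_def less_top)
    with AE_not_in[OF null] show ?thesis
      by (auto elim: AE_mp)
  qed
  have "rearr lebesgue (\<lambda>x. ennreal \<bar>u x\<bar>) = rearr lebesgue (F \<circ> radial)"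
    by (rule rearr_AE_cong[OF u_abs F_radial u_eq])
  also have "\<dots> = F"
    unfolding F_def radial_def o_def by (rule rearr_radial[OF g])
  finally have rearr_u: "rearr lebesgue (\<lambda>x. ennreal \<bar>u x\<bar>) = F" .
  then show "rearr lebesgue (\<lambda>x. ennreal \<bar>u x\<bar>) = rearr halfline (\<lambda>t. ennreal \<bar>f t\<bar>)"
    by (simp add: F_def g_def)
  show norm_u: "\<rho> (\<lambda>x. ennreal \<bar>u x\<bar>) = \<rho>t (\<lambda>t. ennreal \<bar>f t\<bar>)"
    using norm[OF u_abs] rearr_u RIS_rearr_eq[OF RIS g] by (simp add: F_def g_def)
  show "in_space lebesgue \<rho> u"
    using u norm_u f by (simp add: in_space_def)
qed

lemma Top_rearr_cong:
  assumes "rearr M (\<lambda>x. ennreal \<bar>u x\<bar>) = rearr N (\<lambda>x. ennreal \<bar>f x\<bar>)"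
  shows "Top n \<Phi> M u = Top n \<Phi> N f"
  unfolding Top_def dstar_def assms ..

lemma ennreal_le_mult_Inf:
  fixes x :: ennreal
  assumes c: "0 < c" and le: "\<And>s. s \<in> S \<Longrightarrow> x \<le> ennreal c * s"
  shows "x \<le> ennreal c * Inf S"
proof -
  have c': "ennreal c \<noteq> 0" "ennreal c \<noteq> top" using c by auto
  have "x / ennreal c \<le> Inf S"
  proof (rule Inf_greatest)
    fix s assume "s \<in> S"
    then have "x / ennreal c \<le> (s * ennreal c) / ennreal c"
      using le by (intro divide_right_mono_ennreal) (simp add: mult.commute)
    also have "\<dots> = s" using c' by (rule ennreal_mult_divide_eq)
    finally show "x / ennreal c \<le> s" .
  qed
  then have "ennreal c * (x / ennreal c) \<le> ennreal c * Inf S"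
    by (rule mult_left_mono) simp
  moreover have "ennreal c * (x / ennreal c) = x"
    using ennreal_mult_divide_eq[OF c', of x] by (simp add: ennreal_times_divide mult.commute)
  ultimately show ?thesis by simp
qed

lemma Top_halfline_bounded_if_K3_embedded:
  fixes \<rho>E :: "('a::euclidean_space \<Rightarrow> ennreal) \<Rightarrow> ennreal"
  assumes lux: "luxemburg_rep lebesgue \<rho>E \<rho>Et"
    and emb: "\<forall>h\<in>K3 n \<Phi> lebesgue \<rho>E.
      h \<in> borel_measurable halfline \<and> \<rho>Xt h \<le> ennreal C * rho_K3 n \<Phi> lebesgue \<rho>E h"
    and f: "in_space halfline \<rho>Et f"
  shows "Top n \<Phi> halfline f \<in> borel_measurable halfline \<and>
    \<rho>Xt (Top n \<Phi> halfline f) \<le> ennreal C * \<rho>Et (\<lambda>x. ennreal \<bar>f x\<bar>)"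
proof -
  obtain u :: "'a \<Rightarrow> real" where u: "in_space lebesgue \<rho>E u"
    and norm: "\<rho>E (\<lambda>x. ennreal \<bar>u x\<bar>) = \<rho>Et (\<lambda>t. ennreal \<bar>f t\<bar>)"
    and rearr_eq: "rearr lebesgue (\<lambda>x. ennreal \<bar>u x\<bar>) = rearr halfline (\<lambda>t. ennreal \<bar>f t\<bar>)"
    using radial_representative[OF lux f] by blast
  from rearr_eq have Top_eq: "Top n \<Phi> lebesgue u = Top n \<Phi> halfline f"
    by (rule Top_rearr_cong)
  then have in_K3: "Top n \<Phi> halfline f \<in> K3 n \<Phi> lebesgue \<rho>E"
    using u unfolding K3_def by auto
  have "rho_K3 n \<Phi> lebesgue \<rho>E (Top n \<Phi> halfline f) \<le> \<rho>Et (\<lambda>t. ennreal \<bar>f t\<bar>)"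
    unfolding rho_K3_def using u Top_eq norm by (intro Inf_lower) (auto intro!: exI[of _ u])
  then have "ennreal C * rho_K3 n \<Phi> lebesgue \<rho>E (Top n \<Phi> halfline f)
      \<le> ennreal C * \<rho>Et (\<lambda>t. ennreal \<bar>f t\<bar>)"
    by (rule mult_left_mono) simp
  with emb in_K3 show ?thesis
    by (auto intro: order.trans)
qed

lemma K3_embedded_if_Top_halfline_bounded:
  assumes lux: "luxemburg_rep M \<rho>E \<rho>Et" and X: "function_norm halfline \<rho>Xt" and C: "0 < C"
    and bdd: "\<forall>f. in_space halfline \<rho>Et f \<longrightarrow>
      Top n \<Phi> halfline f \<in> borel_measurable halfline \<and>
      \<rho>Xt (Top n \<Phi> halfline f) \<le> ennreal C * \<rho>Et (\<lambda>x. ennreal \<bar>f x\<bar>)"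
    and h: "h \<in> K3 n \<Phi> M \<rho>E"
  shows "h \<in> borel_measurable halfline \<and> \<rho>Xt h < \<infinity> \<and>
    \<rho>Xt h \<le> ennreal C * rho_K3 n \<Phi> M \<rho>E h"
proof -
  have bound: "h \<in> borel_measurable halfline \<and> \<rho>Xt h \<le> ennreal C * \<rho>E (\<lambda>x. ennreal \<bar>u x\<bar>)"
    if u: "in_space M \<rho>E u" and h_eq: "\<forall>t>0. h t = Top n \<Phi> M u t" for u
  proof -
    obtain f where f: "in_space halfline \<rho>Et f"
      and norm: "\<rho>Et (\<lambda>t. ennreal \<bar>f t\<bar>) = \<rho>E (\<lambda>x. ennreal \<bar>u x\<bar>)"
      and rearr_eq: "rearr halfline (\<lambda>t. ennreal \<bar>f t\<bar>) = rearr M (\<lambda>x. ennreal \<bar>u x\<bar>)"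
      using halfline_representative[OF lux u] by blast
    from rearr_eq have "Top n \<Phi> halfline f = Top n \<Phi> M u"
      by (rule Top_rearr_cong)
    with h_eq have h_eq': "\<And>t. t \<in> space halfline \<Longrightarrow> h t = Top n \<Phi> halfline f t"
      by (simp add: space_halfline)
    have T: "Top n \<Phi> halfline f \<in> borel_measurable halfline"
      "\<rho>Xt (Top n \<Phi> halfline f) \<le> ennreal C * \<rho>E (\<lambda>x. ennreal \<bar>u x\<bar>)"
      using bdd f norm by auto
    have hm: "h \<in> borel_measurable halfline"
      using T(1) h_eq' by (simp cong: measurable_cong)
    have "\<rho>Xt h = \<rho>Xt (Top n \<Phi> halfline f)"
      using h_eq' by (intro function_norm_AE_cong[OF X hm T(1)] AE_I2)
    with hm T(2) show ?thesis by simp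
  qed
  obtain u where u: "in_space M \<rho>E u" "\<forall>t>0. h t = Top n \<Phi> M u t"
    using h unfolding K3_def by auto
  have "\<rho>Xt h \<le> ennreal C * \<rho>E (\<lambda>x. ennreal \<bar>u x\<bar>)"
    using bound[OF u] by simp
  also have "\<dots> < \<infinity>"
    using u(1) by (simp add: in_space_def ennreal_mult_less_top)
  finally have "\<rho>Xt h < \<infinity>" .
  moreover have "\<rho>Xt h \<le> ennreal C * rho_K3 n \<Phi> M \<rho>E h"
    unfolding rho_K3_def using bound C by (intro ennreal_le_mult_Inf) auto
  ultimately show ?thesis
    using bound[OF u] by simp
qed

theorem theorem4p2:
  fixes \<rho>E \<rho>X :: "(real^'n \<Rightarrow> ennreal) \<Rightarrow> ennreal"
    and \<rho>Et \<rho>Xt :: "(real \<Rightarrow> ennreal) \<Rightarrow> ennreal"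
    and \<Phi> :: "real \<Rightarrow> real"
  assumes "RIS (lebesgue :: (real^'n) measure) \<rho>E"
    and "RIS (lebesgue :: (real^'n) measure) \<rho>X"
    and "luxemburg_rep (lebesgue :: (real^'n) measure) \<rho>E \<rho>Et"
    and "luxemburg_rep (lebesgue :: (real^'n) measure) \<rho>X \<rho>Xt"
    and "class_B CARD('n) \<Phi>"
  shows "(\<exists>C>0. \<forall>h\<in>K3 CARD('n) \<Phi> (lebesgue :: (real^'n) measure) \<rho>E.
            h \<in> borel_measurable halfline \<and> \<rho>Xt h < \<infinity> \<and>
            \<rho>Xt h \<le> ennreal C * rho_K3 CARD('n) \<Phi> (lebesgue :: (real^'n) measure) \<rho>E h)
         \<longleftrightarrow>
         (\<exists>C>0. \<forall>f. in_space halfline \<rho>Et f \<longrightarrow>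
            Top CARD('n) \<Phi> halfline f \<in> borel_measurable halfline \<and>
            \<rho>Xt (Top CARD('n) \<Phi> halfline f) \<le> ennreal C * \<rho>Et (\<lambda>x. ennreal \<bar>f x\<bar>))"
proof -
  have X: "function_norm halfline \<rho>Xt"
    using assms(4) unfolding luxemburg_rep_def by (blast intro: RIS_function_norm)
  show ?thesis
    using Top_halfline_bounded_if_K3_embedded[OF assms(3)]
      K3_embedded_if_Top_halfline_bounded[OF assms(3) X]
    by meson
qed

end
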